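(* For any temporal feedback graph $\mathcal{S}$ on $T$ rounds, the optimal value of the upper bound dual program (maximize $\sum_{t=1}^T\mu_t$ subject to $\sum_{t\in C_c}\mu_t^2\le 1$ for all $c\in[N]$ and $\mu_t\ge 0$ for all $t\in[T]$) equals $\mathsf{UB}(\mathcal{S})$, the optimal value of the upper bound program (minimize $\sum_{c=1}^N\sqrt{\sum_{t\in C_c}\lambda_{c,t}^2}$ subject to $\sum_{c=1}^N\lambda_{c,t}=1$ for all $t\in[T]$, $\lambda_{c,t}=0$ if $t\notin C_c$, $\lambda_{c,t}\ge0$).
   Context: A temporal feedback graph $\mathcal{S}$ is a collection of subsets $S_t\subseteq[T]\setminus\{t\}$, $t\in[T]$. A sequence of rounds $t_1,\dots,t_w$ is an order if $t_u\in S_{t_v}$ for all $u<v$; it is maximal if no super-sequence of it is an order. $C_1,\dots,C_N$ denote all maximal orders of $\mathcal{S}$. *)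

theory Defs
  imports Complex_Main "HOL-Library.Sublist"
begin

definition tfg :: "nat \<Rightarrow> (nat \<Rightarrow> nat set) \<Rightarrow> bool" where
  "tfg T S \<longleftrightarrow> (\<forall>t\<in>{1..T}. S t \<subseteq> {1..T} - {t})"

definition is_order :: "nat \<Rightarrow> (nat \<Rightarrow> nat set) \<Rightarrow> nat list \<Rightarrow> bool" where
  "is_order T S xs \<longleftrightarrow> set xs \<subseteq> {1..T} \<and>
     (\<forall>u v. u < v \<and> v < length xs \<longrightarrow> xs ! u \<in> S (xs ! v))"

definition is_maximal_order :: "nat \<Rightarrow> (nat \<Rightarrow> nat set) \<Rightarrow> nat list \<Rightarrow> bool" where
  "is_maximal_order T S xs \<longleftrightarrow> is_order T S xs \<and>
     \<not> (\<exists>ys. is_order T S ys \<and> subseq xs ys \<and> ys \<noteq> xs)"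

definition maximal_orders :: "nat \<Rightarrow> (nat \<Rightarrow> nat set) \<Rightarrow> nat list set" where
  "maximal_orders T S = {xs. is_maximal_order T S xs}"

definition UB :: "nat \<Rightarrow> (nat \<Rightarrow> nat set) \<Rightarrow> real" where
  "UB T S = Inf {(\<Sum>c\<in>maximal_orders T S. sqrt (\<Sum>t\<in>set c. (lam c t)\<^sup>2)) | lam.
      (\<forall>t\<in>{1..T}. (\<Sum>c\<in>maximal_orders T S. lam c t) = 1) \<and>
      (\<forall>c\<in>maximal_orders T S. \<forall>t\<in>{1..T}. t \<notin> set c \<longrightarrow> lam c t = 0) \<and>
      (\<forall>c\<in>maximal_orders T S. \<forall>t\<in>{1..T}. lam c t \<ge> 0)}"

definition UB_dual :: "nat \<Rightarrow> (nat \<Rightarrow> nat set) \<Rightarrow> real" where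
  "UB_dual T S = Sup {(\<Sum>t\<in>{1..T}. mu t) | mu.
      (\<forall>c\<in>maximal_orders T S. (\<Sum>t\<in>set c. (mu t)\<^sup>2) \<le> 1) \<and>
      (\<forall>t\<in>{1..T}. mu t \<ge> 0)}"

end

theory Submission
  imports Defs "HOL-Analysis.Analysis"
begin

text \<open>Weak duality is the Cauchy-Schwarz inequality on every maximal order. Conversely, if
  every fractional cover \<lambda> costs more than r, then the all-ones vector is not the load of any
  solution of cost at most r. These solutions form a compact convex set, so the residual
  a = 1 - load of a solution whose load is closest to 1 separates: the pairing of a with every
  such load is at most some \<beta> < \<Sum>t. a t. Pairing a with the solution concentrated on a single
  order C along the positive part a' of a gives r \<parallel>a' on C\<parallel> \<le> \<beta>, so \<mu> = (r / \<beta>) a' is dual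
  feasible with value at least r. Maximal orders enter only through the fact that they cover
  all rounds.\<close>

lemma compact_Pi_UNIV:
  assumes "\<And>i. compact (S i)"
  shows "compact (Pi UNIV S :: ('a \<Rightarrow> 'b::topological_space) set)"
proof -
  have "compactin (product_topology (\<lambda>i. euclidean) UNIV) (PiE UNIV S)"
    using assms by (simp add: compactin_PiE)
  moreover have "PiE UNIV S = Pi UNIV S" by (simp add: PiE_def extensional_def)
  ultimately show ?thesis
    by (simp add: euclidean_product_topology)
qed

lemma continuous_on_app2:
  "continuous_on A (\<lambda>x::'a \<Rightarrow> 'b \<Rightarrow> 'c::topological_space. x i j)"
  by (rule continuous_on_subset[OF continuous_on_product_then_coordinatewise
        [OF continuous_on_product_coordinates] subset_UNIV])

lemma L2_set_convex_combination:
  assumes "0 \<le> s" "s \<le> 1"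
  shows "L2_set (\<lambda>t. (1 - s) * x t + s * y t) A \<le> (1 - s) * L2_set x A + s * L2_set y A"
  using L2_set_triangle_ineq[of "\<lambda>t. (1 - s) * x t" "\<lambda>t. s * y t" A]
    L2_set_right_distrib[of "1 - s" x A] L2_set_right_distrib[of s y A] assms
  by simp

lemma sum_mult_nonpos_if_sum_sq_minimal:
  fixes a d :: "'a \<Rightarrow> real"
  assumes min: "\<And>s. 0 < s \<Longrightarrow> s \<le> 1 \<Longrightarrow> (\<Sum>t\<in>I. (a t)\<^sup>2) \<le> (\<Sum>t\<in>I. (a t - s * d t)\<^sup>2)"
  shows "(\<Sum>t\<in>I. a t * d t) \<le> 0"
proof -
  have expand: "(\<Sum>t\<in>I. (a t - s * d t)\<^sup>2)
      = (\<Sum>t\<in>I. (a t)\<^sup>2) - s * (2 * (\<Sum>t\<in>I. a t * d t) - s * (\<Sum>t\<in>I. (d t)\<^sup>2))" for s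
    by (simp add: power2_eq_square algebra_simps sum.distrib sum_subtractf sum_distrib_left)
  have "2 * (\<Sum>t\<in>I. a t * d t) \<le> s * (\<Sum>t\<in>I. (d t)\<^sup>2)" if "0 < s" "s \<le> 1" for s
    using min[OF that] that by (simp add: expand mult_le_0_iff)
  then have "\<forall>\<^sub>F s in at_right 0. 2 * (\<Sum>t\<in>I. a t * d t) \<le> s * (\<Sum>t\<in>I. (d t)\<^sup>2)"
    by (auto simp: eventually_at_right_less eventually_at_right_field intro!: exI[of _ 1])
  moreover have "((\<lambda>s. s * (\<Sum>t\<in>I. (d t)\<^sup>2)) \<longlongrightarrow> 0 * (\<Sum>t\<in>I. (d t)\<^sup>2)) (at_right 0)"
    by (intro tendsto_intros)
  ultimately have "2 * (\<Sum>t\<in>I. a t * d t) \<le> 0 * (\<Sum>t\<in>I. (d t)\<^sup>2)"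
    by (intro tendsto_lowerbound) auto
  then show ?thesis by simp
qed

lemma cSup_eq_cInf_if_no_gap:
  fixes D P :: "real set"
  assumes "D \<noteq> {}" "P \<noteq> {}"
    and weak: "\<And>d p. d \<in> D \<Longrightarrow> p \<in> P \<Longrightarrow> d \<le> p"
    and no_gap: "\<And>r. (\<And>p. p \<in> P \<Longrightarrow> r < p) \<Longrightarrow> \<exists>d\<in>D. r \<le> d"
  shows "Sup D = Inf P"
proof (rule antisym)
  show "Sup D \<le> Inf P"
    using assms by (intro cInf_greatest cSup_least) auto
  obtain d0 p0 where "d0 \<in> D" "p0 \<in> P"
    using assms(1,2) by blast
  then have "bdd_above D" "bdd_below P"
    using weak by (auto intro!: bdd_aboveI[of _ p0] bdd_belowI[of _ d0])
  show "Inf P \<le> Sup D"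
  proof (rule dense_le)
    fix r
    assume "r < Inf P"
    then have "r < p" if "p \<in> P" for p
      using cInf_lower[OF that \<open>bdd_below P\<close>] by linarith
    then obtain d where "d \<in> D" "r \<le> d"
      using no_gap by blast
    then show "r \<le> Sup D"
      using cSup_upper[OF _ \<open>bdd_above D\<close>] order_trans by blast
  qed
qed

locale cover_duality =
  fixes I :: "'a set" and M :: "'c set" and B :: "'c \<Rightarrow> 'a set"
  assumes finite_I: "finite I" and finite_M: "finite M"
    and B_subset: "\<And>c. c \<in> M \<Longrightarrow> B c \<subseteq> I"
    and covers: "\<And>t. t \<in> I \<Longrightarrow> \<exists>c\<in>M. t \<in> B c"
begin

definition load :: "('c \<Rightarrow> 'a \<Rightarrow> real) \<Rightarrow> 'a \<Rightarrow> real" where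
  "load lam t = (\<Sum>c\<in>M. lam c t)"

definition primal_feasible :: "('c \<Rightarrow> 'a \<Rightarrow> real) \<Rightarrow> bool" where
  "primal_feasible lam \<longleftrightarrow> (\<forall>t\<in>I. load lam t = 1) \<and>
     (\<forall>c\<in>M. \<forall>t\<in>I. t \<notin> B c \<longrightarrow> lam c t = 0) \<and> (\<forall>c\<in>M. \<forall>t\<in>I. 0 \<le> lam c t)"

definition primal_cost :: "('c \<Rightarrow> 'a \<Rightarrow> real) \<Rightarrow> real" where
  "primal_cost lam = (\<Sum>c\<in>M. L2_set (lam c) (B c))"

definition dual_feasible :: "('a \<Rightarrow> real) \<Rightarrow> bool" where
  "dual_feasible mu \<longleftrightarrow> (\<forall>c\<in>M. (\<Sum>t\<in>B c. (mu t)\<^sup>2) \<le> 1) \<and> (\<forall>t\<in>I. 0 \<le> mu t)"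

lemma finite_B: "c \<in> M \<Longrightarrow> finite (B c)"
  using B_subset finite_I finite_subset by blast

lemma weak_duality:
  assumes lam: "primal_feasible lam" and mu: "dual_feasible mu"
  shows "(\<Sum>t\<in>I. mu t) \<le> primal_cost lam"
proof -
  have "(\<Sum>t\<in>I. mu t) = (\<Sum>t\<in>I. mu t * (\<Sum>c\<in>M. lam c t))"
    using lam by (simp add: primal_feasible_def load_def)
  also have "\<dots> = (\<Sum>c\<in>M. \<Sum>t\<in>I. mu t * lam c t)"
    unfolding sum_distrib_left by (rule sum.swap)
  also have "\<dots> = (\<Sum>c\<in>M. \<Sum>t\<in>B c. mu t * lam c t)"
    using lam B_subset finite_I
    by (intro sum.cong refl sum.mono_neutral_right) (auto simp: primal_feasible_def)
  also have "\<dots> \<le> (\<Sum>c\<in>M. L2_set mu (B c) * L2_set (lam c) (B c))"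
    by (intro sum_mono order_trans[OF _ L2_set_mult_ineq]) (metis abs_ge_self abs_mult)
  also have "\<dots> \<le> (\<Sum>c\<in>M. 1 * L2_set (lam c) (B c))"
    using mu by (intro sum_mono mult_right_mono) (auto simp: dual_feasible_def L2_set_def sum_nonneg)
  finally show ?thesis by (simp add: primal_cost_def)
qed

lemma primal_feasible_exists: "\<exists>lam. primal_feasible lam"
proof -
  obtain p where p: "\<And>t. t \<in> I \<Longrightarrow> p t \<in> M \<and> t \<in> B (p t)"
    using covers by metis
  have "primal_feasible (\<lambda>c t. if c = p t then 1 else 0)"
    using p finite_M by (auto simp: primal_feasible_def load_def)
  then show ?thesis by blast
qed

text \<open>The entrywise bound by r is implied by the cost bound; it only makes compactness evident.\<close>
definition budget :: "real \<Rightarrow> ('c \<Rightarrow> 'a \<Rightarrow> real) set" where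
  "budget r = {lam. (\<forall>c t. lam c t \<in> (if c \<in> M \<and> t \<in> B c then {0..r} else {0})) \<and>
     primal_cost lam \<le> r}"

lemma compact_budget: "compact (budget r)"
proof -
  have box_iff: "lam \<in> Pi UNIV (\<lambda>c. Pi UNIV (\<lambda>t. if c \<in> M \<and> t \<in> B c then {0..r} else {0}))
      \<longleftrightarrow> (\<forall>c t. lam c t \<in> (if c \<in> M \<and> t \<in> B c then {0..r} else {0}))" for lam
    by (simp add: Pi_iff)
  have "budget r = Pi UNIV (\<lambda>c. Pi UNIV (\<lambda>t. if c \<in> M \<and> t \<in> B c then {0..r} else {0}))
      \<inter> {lam. primal_cost lam \<le> r}"
    by (simp only: budget_def Int_def mem_Collect_eq box_iff)
  moreover have "compact (Pi UNIV (\<lambda>c. Pi UNIV (\<lambda>t. if c \<in> M \<and> t \<in> B c then {0..r} else {0})))"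
    by (intro compact_Pi_UNIV) (simp add: compact_Icc)
  moreover have "closed {lam. primal_cost lam \<le> r}"
    unfolding primal_cost_def L2_set_def
    by (intro closed_Collect_le continuous_intros continuous_on_app2)
  ultimately show ?thesis
    by (simp add: compact_Int_closed)
qed

lemma budget_convex:
  assumes lam: "lam \<in> budget r" and lam': "lam' \<in> budget r" and s: "0 \<le> s" "s \<le> 1"
  shows "(\<lambda>c t. (1 - s) * lam c t + s * lam' c t) \<in> budget r"
proof -
  have "primal_cost (\<lambda>c t. (1 - s) * lam c t + s * lam' c t)
      \<le> (\<Sum>c\<in>M. (1 - s) * L2_set (lam c) (B c) + s * L2_set (lam' c) (B c))"
    unfolding primal_cost_def using s by (intro sum_mono L2_set_convex_combination)
  also have "\<dots> = (1 - s) * primal_cost lam + s * primal_cost lam'"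
    by (simp add: primal_cost_def sum.distrib sum_distrib_left)
  also have "\<dots> \<le> (1 - s) * r + s * r"
    using lam lam' s by (intro add_mono mult_left_mono) (auto simp: budget_def)
  finally have "primal_cost (\<lambda>c t. (1 - s) * lam c t + s * lam' c t) \<le> r"
    by (simp add: algebra_simps)
  moreover have "(1 - s) * lam c t + s * lam' c t \<in> (if c \<in> M \<and> t \<in> B c then {0..r} else {0})"
    for c t
  proof -
    have lam_ct: "lam c t \<in> (if c \<in> M \<and> t \<in> B c then {0..r} else {0})"
      "lam' c t \<in> (if c \<in> M \<and> t \<in> B c then {0..r} else {0})"
      using lam lam' by (auto simp: budget_def)
    show ?thesis
    proof (cases "c \<in> M \<and> t \<in> B c")
      case True
      with lam_ct have "0 \<le> lam c t" "lam c t \<le> r" "0 \<le> lam' c t" "lam' c t \<le> r" by auto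
      with s show ?thesis
        using True convex_bound_le[of "lam c t" r "lam' c t" "1 - s" s] by simp
    qed (use lam_ct in auto)
  qed
  ultimately show ?thesis
    by (simp only: budget_def mem_Collect_eq) blast
qed

lemma zero_in_budget:
  assumes "0 \<le> r"
  shows "(\<lambda>c t. 0) \<in> budget r"
proof -
  have "(0::real) \<in> (if c \<in> M \<and> t \<in> B c then {0..r} else {0})" for c t
    using assms by simp
  moreover have "primal_cost (\<lambda>c t. 0) \<le> r"
    using assms by (simp add: primal_cost_def L2_set_def)
  ultimately show ?thesis
    by (simp only: budget_def mem_Collect_eq) blast
qed

lemma concentrated_in_budget:
  assumes r: "0 \<le> r" and c: "c \<in> M" and nonneg: "\<And>t. t \<in> B c \<Longrightarrow> 0 \<le> \<nu> t"
    and norm: "L2_set \<nu> (B c) \<le> r"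
  shows "(\<lambda>c' t. if c' = c \<and> t \<in> B c then \<nu> t else 0) \<in> budget r"
proof -
  have "\<nu> t \<le> r" if "t \<in> B c" for t
    using member_le_L2_set[OF finite_B[OF c] that, of \<nu>] norm by linarith
  moreover have "L2_set (\<lambda>t. if c' = c \<and> t \<in> B c then \<nu> t else 0) (B c')
      = (if c' = c then L2_set \<nu> (B c) else 0)" for c'
    by (auto intro: L2_set_cong L2_set_0')
  then have "primal_cost (\<lambda>c' t. if c' = c \<and> t \<in> B c then \<nu> t else 0) = L2_set \<nu> (B c)"
    using c finite_M by (simp add: primal_cost_def)
  ultimately show ?thesis
    using r c nonneg norm by (auto simp: budget_def)
qed

lemma load_concentrated:
  "c \<in> M \<Longrightarrow> load (\<lambda>c' t. if c' = c \<and> t \<in> B c then \<nu> t else 0) t = (if t \<in> B c then \<nu> t else 0)"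
  using finite_M by (cases "t \<in> B c") (simp_all add: load_def)

lemma load_convex:
  "load (\<lambda>c t. (1 - s) * lam c t + s * lam' c t) t = (1 - s) * load lam t + s * load lam' t"
  by (simp add: load_def sum.distrib sum_distrib_left)

lemma primal_feasible_if_budget_load_1:
  assumes "lam \<in> budget r" and "\<And>t. t \<in> I \<Longrightarrow> load lam t = 1"
  shows "primal_feasible lam"
proof -
  have box: "lam c t \<in> (if c \<in> M \<and> t \<in> B c then {0..r} else {0})" for c t
    using assms(1) by (simp add: budget_def)
  then have "lam c t = 0" if "t \<notin> B c" for c t
    using box[of c t] that by simp
  moreover have "0 \<le> lam c t" for c t
    using box[of c t] by (auto split: if_splits)
  ultimately show ?thesis
    using assms(2) by (simp add: primal_feasible_def)
qed

lemma budget_separation: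
  assumes r: "0 \<le> r" and gap: "\<And>lam. primal_feasible lam \<Longrightarrow> r < primal_cost lam"
  shows "\<exists>a \<beta>. 0 \<le> \<beta> \<and> \<beta> < (\<Sum>t\<in>I. a t) \<and> (\<forall>lam\<in>budget r. (\<Sum>t\<in>I. a t * load lam t) \<le> \<beta>)"
proof -
  define defect where "defect lam = (\<Sum>t\<in>I. (1 - load lam t)\<^sup>2)" for lam
  have "continuous_on (budget r) defect"
    unfolding defect_def load_def by (intro continuous_intros continuous_on_app2)
  then obtain ls where ls: "ls \<in> budget r"
    and ls_min: "\<And>lam. lam \<in> budget r \<Longrightarrow> defect ls \<le> defect lam"
    using continuous_attains_inf[OF compact_budget] zero_in_budget[OF r] by blast
  define a where "a t = 1 - load ls t" for t
  define \<beta> where "\<beta> = (\<Sum>t\<in>I. a t * load ls t)"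
  have sep: "(\<Sum>t\<in>I. a t * load lam t) \<le> \<beta>" if lam: "lam \<in> budget r" for lam
  proof -
    have "(\<Sum>t\<in>I. a t * (load lam t - load ls t)) \<le> 0"
    proof (rule sum_mult_nonpos_if_sum_sq_minimal)
      fix s :: real
      assume "0 < s" "s \<le> 1"
      define m where "m = (\<lambda>c t. (1 - s) * ls c t + s * lam c t)"
      have "m \<in> budget r"
        unfolding m_def using \<open>0 < s\<close> \<open>s \<le> 1\<close> by (intro budget_convex ls lam) auto
      then have "defect ls \<le> defect m"
        by (rule ls_min)
      moreover have "1 - load m t = a t - s * (load lam t - load ls t)" for t
        unfolding m_def load_convex a_def by (simp add: algebra_simps)
      then have "defect m = (\<Sum>t\<in>I. (a t - s * (load lam t - load ls t))\<^sup>2)"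
        by (simp only: defect_def)
      moreover have "defect ls = (\<Sum>t\<in>I. (a t)\<^sup>2)"
        by (simp add: defect_def a_def)
      ultimately show "(\<Sum>t\<in>I. (a t)\<^sup>2) \<le> (\<Sum>t\<in>I. (a t - s * (load lam t - load ls t))\<^sup>2)"
        by simp
    qed
    then show ?thesis
      by (simp add: \<beta>_def right_diff_distrib sum_subtractf)
  qed
  have "0 \<le> \<beta>"
    using sep[OF zero_in_budget[OF r]] by (simp add: load_def)
  moreover have "\<exists>t\<in>I. a t \<noteq> 0"
  proof (rule ccontr)
    assume "\<not> (\<exists>t\<in>I. a t \<noteq> 0)"
    then have "primal_feasible ls"
      by (intro primal_feasible_if_budget_load_1[OF ls]) (simp add: a_def)
    then have "r < primal_cost ls"
      by (rule gap)
    with ls show False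
      unfolding budget_def by simp
  qed
  then have "0 < (\<Sum>t\<in>I. (a t)\<^sup>2)"
    using sum_pos2[OF finite_I] by (metis zero_le_power2 zero_less_power2)
  moreover have "a t = a t * load ls t + (a t)\<^sup>2" for t
    by (simp add: a_def power2_eq_square algebra_simps)
  then have "(\<Sum>t\<in>I. a t) = \<beta> + (\<Sum>t\<in>I. (a t)\<^sup>2)"
    unfolding \<beta>_def sum.distrib[symmetric] by (rule sum.cong[OF refl])
  ultimately show ?thesis
    using sep by (intro exI[of _ a] exI[of _ \<beta>]) auto
qed

lemma separation_bounds_pos_part:
  assumes r: "0 \<le> r" and c: "c \<in> M"
    and sep: "\<And>lam. lam \<in> budget r \<Longrightarrow> (\<Sum>t\<in>I. a t * load lam t) \<le> \<beta>"
  shows "r * L2_set (\<lambda>t. max 0 (a t)) (B c) \<le> \<beta>"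
proof -
  define n where "n = L2_set (\<lambda>t. max 0 (a t)) (B c)"
  show ?thesis
  proof (cases "n = 0")
    case True
    then show ?thesis
      using sep[OF zero_in_budget[OF r]] by (simp add: n_def load_def)
  next
    case False
    then have n: "0 < n"
      using L2_set_nonneg[of _ "B c"] by (simp add: n_def order_less_le)
    define \<nu> where "\<nu> t = r / n * max 0 (a t)" for t
    have "L2_set \<nu> (B c) = r / n * L2_set (\<lambda>t. max 0 (a t)) (B c)"
      unfolding \<nu>_def using r n by (intro L2_set_right_distrib[symmetric]) simp
    then have "L2_set \<nu> (B c) \<le> r"
      using n by (simp add: n_def[symmetric])
    moreover have "0 \<le> \<nu> t" for t
      using r n by (simp add: \<nu>_def)
    ultimately have "(\<lambda>c' t. if c' = c \<and> t \<in> B c then \<nu> t else 0) \<in> budget r"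
      using concentrated_in_budget[OF r c] by blast
    from sep[OF this] have "(\<Sum>t\<in>I. a t * (if t \<in> B c then \<nu> t else 0)) \<le> \<beta>"
      by (simp add: load_concentrated[OF c])
    moreover have "(\<Sum>t\<in>I. a t * (if t \<in> B c then \<nu> t else 0)) = (\<Sum>t\<in>B c. a t * \<nu> t)"
      using B_subset[OF c] finite_I
      by (simp add: if_distrib sum.If_cases Int_absorb1 cong: if_cong)
    moreover have "a t * \<nu> t = r / n * (max 0 (a t))\<^sup>2" for t
      by (simp add: \<nu>_def max_def power2_eq_square)
    then have "(\<Sum>t\<in>B c. a t * \<nu> t) = r / n * n\<^sup>2"
      by (simp add: n_def L2_set_def sum_distrib_left sum_nonneg)
    ultimately show ?thesis
      using n by (simp add: n_def[symmetric] power2_eq_square)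
  qed
qed

lemma dual_feasible_from_separation:
  assumes r: "0 < r" and "0 \<le> \<beta>" and less: "\<beta> < (\<Sum>t\<in>I. a t)"
    and bound: "\<And>c. c \<in> M \<Longrightarrow> r * L2_set (\<lambda>t. max 0 (a t)) (B c) \<le> \<beta>"
  shows "\<exists>mu. dual_feasible mu \<and> r \<le> (\<Sum>t\<in>I. mu t)"
proof -
  have sum_le: "(\<Sum>t\<in>I. a t) \<le> (\<Sum>t\<in>I. max 0 (a t))"
    by (intro sum_mono) simp
  have "0 < \<beta>"
  proof (rule ccontr)
    assume "\<not> 0 < \<beta>"
    with \<open>0 \<le> \<beta>\<close> have "\<beta> = 0"
      by simp
    have "max 0 (a t) = 0" if t: "t \<in> I" for t
    proof -
      obtain c where c: "c \<in> M" and "t \<in> B c"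
        using covers[OF t] by blast
      have "r * L2_set (\<lambda>t. max 0 (a t)) (B c) \<le> 0"
        using bound[OF c] \<open>\<beta> = 0\<close> by simp
      then have "L2_set (\<lambda>t. max 0 (a t)) (B c) \<le> 0"
        using mult_le_cancel_left_pos[OF r, of _ 0] by simp
      then have "L2_set (\<lambda>t. max 0 (a t)) (B c) = 0"
        using L2_set_nonneg[of "\<lambda>t. max 0 (a t)" "B c"] by linarith
      then show ?thesis
        using L2_set_eq_0_iff[OF finite_B[OF c], of "\<lambda>t. max 0 (a t)"] \<open>t \<in> B c\<close> by simp
    qed
    then have "(\<Sum>t\<in>I. max 0 (a t)) = 0"
      by (intro sum.neutral) blast
    with sum_le less \<open>\<beta> = 0\<close> show False
      by linarith
  qed
  define mu where "mu t = r / \<beta> * max 0 (a t)" for t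
  have "(\<Sum>t\<in>B c. (mu t)\<^sup>2) \<le> 1" if c: "c \<in> M" for c
  proof -
    have "L2_set mu (B c) = r / \<beta> * L2_set (\<lambda>t. max 0 (a t)) (B c)"
      unfolding mu_def using r \<open>0 < \<beta>\<close> by (intro L2_set_right_distrib[symmetric]) simp
    also have "\<dots> \<le> 1"
      using bound[OF c] \<open>0 < \<beta>\<close> by (simp add: pos_divide_le_eq)
    finally show ?thesis
      by (simp add: L2_set_def)
  qed
  moreover have "0 \<le> mu t" for t
    using r \<open>0 < \<beta>\<close> by (simp add: mu_def)
  ultimately have "dual_feasible mu"
    by (simp add: dual_feasible_def)
  moreover have "r \<le> (\<Sum>t\<in>I. mu t)"
  proof -
    have "r = r / \<beta> * \<beta>"
      using \<open>0 < \<beta>\<close> by simp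
    also have "\<dots> \<le> r / \<beta> * (\<Sum>t\<in>I. max 0 (a t))"
      using r \<open>0 < \<beta>\<close> less sum_le by (intro mult_left_mono) simp_all
    also have "\<dots> = (\<Sum>t\<in>I. mu t)"
      by (simp add: mu_def sum_distrib_left)
    finally show ?thesis .
  qed
  ultimately show ?thesis
    by blast
qed

lemma strong_duality:
  assumes gap: "\<And>lam. primal_feasible lam \<Longrightarrow> r < primal_cost lam"
  shows "\<exists>mu. dual_feasible mu \<and> r \<le> (\<Sum>t\<in>I. mu t)"
proof (cases "0 < r")
  case True
  then obtain a \<beta> where "0 \<le> \<beta>" "\<beta> < (\<Sum>t\<in>I. a t)"
    and "\<And>lam. lam \<in> budget r \<Longrightarrow> (\<Sum>t\<in>I. a t * load lam t) \<le> \<beta>"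
    using budget_separation[OF _ gap] by force
  with True show ?thesis
    by (intro dual_feasible_from_separation separation_bounds_pos_part) auto
next
  case False
  then have "dual_feasible (\<lambda>_. 0) \<and> r \<le> (\<Sum>t\<in>I. 0)"
    by (simp add: dual_feasible_def)
  then show ?thesis
    by blast
qed

lemma duality:
  "Sup {(\<Sum>t\<in>I. mu t) | mu. dual_feasible mu} = Inf {primal_cost lam | lam. primal_feasible lam}"
proof (rule cSup_eq_cInf_if_no_gap)
  have "dual_feasible (\<lambda>_. 0)"
    by (simp add: dual_feasible_def)
  then show "{(\<Sum>t\<in>I. mu t) | mu. dual_feasible mu} \<noteq> {}"
    by blast
  show "{primal_cost lam | lam. primal_feasible lam} \<noteq> {}"
    using primal_feasible_exists by blast
next
  fix d p
  assume "d \<in> {(\<Sum>t\<in>I. mu t) | mu. dual_feasible mu}" "p \<in> {primal_cost lam | lam. primal_feasible lam}"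
  then show "d \<le> p"
    using weak_duality by blast
next
  fix r
  assume "\<And>p. p \<in> {primal_cost lam | lam. primal_feasible lam} \<Longrightarrow> r < p"
  then have "r < primal_cost lam" if "primal_feasible lam" for lam
    using that by blast
  then obtain mu where "dual_feasible mu" "r \<le> (\<Sum>t\<in>I. mu t)"
    using strong_duality by blast
  then show "\<exists>d\<in>{(\<Sum>t\<in>I. mu t) | mu. dual_feasible mu}. r \<le> d"
    by blast
qed

end

lemma is_order_distinct:
  assumes tfg: "tfg T S" and xs: "is_order T S xs"
  shows "distinct xs"
proof -
  have neq: "xs ! u \<noteq> xs ! v" if "u < v" "v < length xs" for u v
  proof -
    have "xs ! u \<in> S (xs ! v)" and "xs ! v \<in> {1..T}"
      using xs that nth_mem[OF that(2)] unfolding is_order_def by blast+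
    then show ?thesis
      using tfg by (auto simp: tfg_def)
  qed
  show ?thesis
    unfolding distinct_conv_nth
  proof (intro allI impI)
    fix i j
    assume "i < length xs" "j < length xs" "i \<noteq> j"
    then show "xs ! i \<noteq> xs ! j"
      using neq[of i j] neq[of j i] by (cases "i < j") auto
  qed
qed

lemma finite_orders:
  assumes "tfg T S"
  shows "finite {xs. is_order T S xs}"
proof (rule finite_subset[OF _ finite_lists_length_le[of "{1..T}" T]])
  have "set xs \<subseteq> {1..T} \<and> length xs \<le> T" if xs: "is_order T S xs" for xs
  proof
    show "set xs \<subseteq> {1..T}"
      using xs by (simp add: is_order_def)
    have "length xs = card (set xs)"
      using is_order_distinct[OF assms xs] by (simp add: distinct_card)
    also have "\<dots> \<le> card {1..T}"
      using xs by (intro card_mono) (auto simp: is_order_def)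
    finally show "length xs \<le> T"
      by simp
  qed
  then show "{xs. is_order T S xs} \<subseteq> {xs. set xs \<subseteq> {1..T} \<and> length xs \<le> T}"
    by blast
qed simp

text \<open>A longest order through t is maximal, since a proper super-sequence is longer.\<close>
lemma ex_maximal_order_containing:
  assumes tfg: "tfg T S" and t: "t \<in> {1..T}"
  shows "\<exists>c\<in>maximal_orders T S. t \<in> set c"
proof -
  define Os where "Os = {ys. is_order T S ys \<and> t \<in> set ys}"
  have "finite Os"
    unfolding Os_def by (rule finite_subset[OF _ finite_orders[OF tfg]]) auto
  moreover have "[t] \<in> Os"
    using t by (simp add: Os_def is_order_def)
  ultimately have "Max (length ` Os) \<in> length ` Os"
    by (intro Max_in) auto
  then obtain ys where ys: "ys \<in> Os" and max: "length ys = Max (length ` Os)"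
    by auto
  have longest: "length zs \<le> length ys" if "zs \<in> Os" for zs
    unfolding max using \<open>finite Os\<close> that by simp
  have "is_maximal_order T S ys"
    unfolding is_maximal_order_def
  proof (intro conjI notI)
    show "is_order T S ys"
      using ys by (simp add: Os_def)
  next
    assume "\<exists>zs. is_order T S zs \<and> subseq ys zs \<and> zs \<noteq> ys"
    then obtain zs where zs: "is_order T S zs" "subseq ys zs" "zs \<noteq> ys"
      by blast
    then have "zs \<in> Os"
      using list_emb_set[OF zs(2)] ys by (auto simp: Os_def)
    then have "length zs \<le> length ys"
      by (rule longest)
    then have "length ys = length zs"
      using list_emb_length[OF zs(2)] by (rule antisym[rotated])
    with zs show False
      using subseq_same_length by blast
  qed
  then show ?thesis
    using ys by (auto simp: maximal_orders_def Os_def)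
qed

lemma cover_duality_maximal_orders:
  assumes "tfg T S"
  shows "cover_duality {1..T} (maximal_orders T S) set"
proof
  show "finite (maximal_orders T S)"
    using finite_orders[OF assms]
    by (rule finite_subset[rotated]) (auto simp: maximal_orders_def is_maximal_order_def)
  show "set c \<subseteq> {1..T}" if "c \<in> maximal_orders T S" for c
    using that by (simp add: maximal_orders_def is_maximal_order_def is_order_def)
  show "\<exists>c\<in>maximal_orders T S. t \<in> set c" if "t \<in> {1..T}" for t
    using ex_maximal_order_containing[OF assms that] .
qed simp

theorem theorem2:
  fixes T :: nat and S :: "nat \<Rightarrow> nat set"
  assumes "tfg T S"
  shows "UB_dual T S = UB T S"
proof -
  interpret cover_duality "{1..T}" "maximal_orders T S" set
    using assms by (rule cover_duality_maximal_orders)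
  show ?thesis
    using duality
    unfolding UB_def UB_dual_def primal_feasible_def dual_feasible_def primal_cost_def
      load_def L2_set_def .
qed

end
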